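(* A measure $\mu$ on $\mathbb Z$ is a doubling minimizer if and only if it is constant.
   Context: $\mathbb Z$ is regarded as the infinite path graph with edges $\{j,j+1\}$ and distance $d(i,j)=|i-j|$. A measure $\mu$ is a weight function $\mu:\mathbb Z\to(0,\infty)$, with $\mu(A)=\sum_{v\in A}\mu(v)$. Closed balls are $B(x,r)=\{y:|x-y|\le r\}$. The doubling constant is $C_\mu=\sup\{\mu(B(x,2k+1))/\mu(B(x,k)): x\in \mathbb Z,\ k\in\{0,1,2,\dots\}\}$; $\mu$ is doubling if $C_\mu<\infty$; $C_{\mathbb Z}=\inf\{C_\mu:\mu\text{ doubling}\}$. A doubling minimizer is a doubling measure $\mu$ with $C_\mu=C_{\mathbb Z}$. *)

theory Defs
  imports "HOL-Analysis.Analysis"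
begin

definition is_measure :: "(int \<Rightarrow> real) \<Rightarrow> bool" where
  "is_measure \<mu> \<longleftrightarrow> (\<forall>v. \<mu> v > 0)"

definition ball_Z :: "int \<Rightarrow> nat \<Rightarrow> int set" where
  "ball_Z x r = {y. \<bar>x - y\<bar> \<le> int r}"

definition meas :: "(int \<Rightarrow> real) \<Rightarrow> int set \<Rightarrow> real" where
  "meas \<mu> A = (\<Sum>v\<in>A. \<mu> v)"

definition doubling_const :: "(int \<Rightarrow> real) \<Rightarrow> ereal" where
  "doubling_const \<mu> =
     (SUP p \<in> (UNIV :: (int \<times> nat) set).
        ereal (meas \<mu> (ball_Z (fst p) (2 * snd p + 1)) / meas \<mu> (ball_Z (fst p) (snd p))))"

definition doubling :: "(int \<Rightarrow> real) \<Rightarrow> bool" where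
  "doubling \<mu> \<longleftrightarrow> is_measure \<mu> \<and> doubling_const \<mu> < \<infinity>"

definition C_Z :: ereal where
  "C_Z = (INF \<mu> \<in> {\<mu>. doubling \<mu>}. doubling_const \<mu>)"

definition doubling_minimizer :: "(int \<Rightarrow> real) \<Rightarrow> bool" where
  "doubling_minimizer \<mu> \<longleftrightarrow> doubling \<mu> \<and> doubling_const \<mu> = C_Z"

end

theory Submission
  imports Defs
begin

text \<open>At radius 0 the doubling ratio at x is (\<mu>(x-1) + \<mu> x + \<mu>(x+1)) / \<mu> x, so
  a measure with doubling constant at most 3 is discretely concave. A concave function
  on Z that is bounded below is constant: a strict descent in either direction would
  continue with at least the same slope and eventually drive it below any bound.
  Conversely a constant measure has doubling constant exactly 3, because B(x,2k+1)
  has 4k+3 \<le> 3(2k+1) points. Hence C_Z = 3, and it is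
  attained precisely by the constant measures.\<close>

lemma ball_Z_eq_atLeastAtMost: "ball_Z x r = {x - int r .. x + int r}"
  unfolding ball_Z_def by auto

lemma meas_const_ball_Z: "meas (\<lambda>_. c) (ball_Z x r) = c * (2 * real r + 1)"
proof -
  have "card (ball_Z x r) = 2 * r + 1"
    unfolding ball_Z_eq_atLeastAtMost by simp
  then show ?thesis
    unfolding meas_def by simp
qed

lemma concave_bounded_below_mono_step:
  fixes f :: "int \<Rightarrow> real"
  assumes concave: "\<And>x. f (x - 1) + f (x + 1) \<le> 2 * f x"
    and bound: "\<And>x. b \<le> f x"
  shows "f x \<le> f (x + 1)"
proof (rule ccontr)
  define d where "d = f (x + 1) - f x"
  assume "\<not> f x \<le> f (x + 1)"
  then have "d < 0"
    unfolding d_def by simp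
  have slope: "f (x + int n + 1) - f (x + int n) \<le> d" for n
  proof (induction n)
    case (Suc n)
    then show ?case
      using concave[of "x + int n + 1"] by (simp add: algebra_simps)
  qed (simp add: d_def)
  have descent: "f (x + int n) \<le> f x + real n * d" for n
  proof (induction n)
    case (Suc n)
    then show ?case
      using slope[of n] by (simp add: algebra_simps)
  qed simp
  obtain n where "f x - b < real n * (- d)"
    using ex_less_of_nat_mult \<open>d < 0\<close> by (metis neg_0_less_iff_less)
  then show False
    using descent[of n] bound[of "x + int n"] by (simp add: algebra_simps)
qed

lemma concave_bounded_below_const:
  fixes f :: "int \<Rightarrow> real"
  assumes concave: "\<And>x. f (x - 1) + f (x + 1) \<le> 2 * f x"
    and bound: "\<And>x. b \<le> f x"
  shows "f x = f 0"
proof -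
  have step: "f (x + 1) = f x" for x
  proof (rule antisym)
    show "f x \<le> f (x + 1)"
      using concave_bounded_below_mono_step[OF concave bound] .
    \<comment> \<open>the mirror image of f is concave and bounded below as well\<close>
    have "f (- (- x - 1)) \<le> f (- (- x - 1 + 1))"
      by (rule concave_bounded_below_mono_step[where f = "\<lambda>y. f (- y)" and b = b])
        (use concave[of "- _"] bound in \<open>simp_all add: add.commute\<close>)
    then show "f (x + 1) \<le> f x"
      by (simp add: add.commute)
  qed
  show ?thesis
    by (induction x rule: int_induct[where k = 0]) (simp_all add: step flip: step[of "_ - 1"])
qed

lemma doubling_ratio_le_doubling_const:
  "ereal (meas \<mu> (ball_Z x (2 * k + 1)) / meas \<mu> (ball_Z x k)) \<le> doubling_const \<mu>"
  unfolding doubling_const_def by (rule SUP_upper2[of "(x, k)"]) auto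

lemma doubling_const_const:
  assumes "c > 0"
  shows "doubling_const (\<lambda>_. c) = 3"
proof (rule antisym)
  show "doubling_const (\<lambda>_. c) \<le> 3"
    unfolding doubling_const_def
  proof (rule SUP_least)
    fix p :: "int \<times> nat"
    have "c * (2 * real (2 * snd p + 1) + 1) \<le> 3 * (c * (2 * real (snd p) + 1))"
      using assms by (simp add: algebra_simps)
    then show "ereal (meas (\<lambda>_. c) (ball_Z (fst p) (2 * snd p + 1))
        / meas (\<lambda>_. c) (ball_Z (fst p) (snd p))) \<le> 3"
      using assms by (simp add: meas_const_ball_Z divide_le_eq)
  qed
  show "3 \<le> doubling_const (\<lambda>_. c)"
    using doubling_ratio_le_doubling_const[of "\<lambda>_. c" 0 0] assms
    by (simp add: meas_const_ball_Z)
qed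

lemma doubling_const_le_3_imp_const:
  assumes \<mu>: "is_measure \<mu>" and le: "doubling_const \<mu> \<le> 3"
  shows "\<mu> = (\<lambda>_. \<mu> 0)"
proof
  have pos: "\<mu> x > 0" for x
    using \<mu> unfolding is_measure_def by blast
  have "\<mu> (x - 1) + \<mu> (x + 1) \<le> 2 * \<mu> x" for x
  proof -
    have "ball_Z x 1 = {x - 1, x, x + 1}" "ball_Z x 0 = {x}"
      unfolding ball_Z_def by auto
    then have "ereal ((\<mu> (x - 1) + \<mu> x + \<mu> (x + 1)) / \<mu> x) \<le> 3"
      using order_trans[OF doubling_ratio_le_doubling_const[of \<mu> x 0] le]
      by (simp add: meas_def add.assoc)
    then show ?thesis
      using pos[of x] by (simp add: divide_le_eq)
  qed
  then show "\<mu> x = \<mu> 0" for x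
    using concave_bounded_below_const[where b = 0] pos by (meson less_imp_le)
qed

lemma doubling_const_ge_3:
  assumes "is_measure \<mu>"
  shows "3 \<le> doubling_const \<mu>"
proof (rule ccontr)
  assume "\<not> 3 \<le> doubling_const \<mu>"
  then have "\<mu> = (\<lambda>_. \<mu> 0)"
    using doubling_const_le_3_imp_const[OF assms] by simp
  moreover have "\<mu> 0 > 0"
    using assms unfolding is_measure_def by blast
  ultimately have "doubling_const \<mu> = 3"
    by (metis doubling_const_const)
  with \<open>\<not> 3 \<le> doubling_const \<mu>\<close> show False
    by simp
qed

lemma C_Z_eq_3: "C_Z = 3"
proof -
  have "doubling (\<lambda>_. 1)"
    unfolding doubling_def is_measure_def by (simp add: doubling_const_const)
  then have "C_Z \<le> 3"
    unfolding C_Z_def by (metis INF_lower doubling_const_const mem_Collect_eq zero_less_one)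
  moreover have "3 \<le> C_Z"
    unfolding C_Z_def doubling_def by (rule INF_greatest) (blast intro: doubling_const_ge_3)
  ultimately show ?thesis
    by simp
qed

theorem theorem4p6:
  fixes \<mu> :: "int \<Rightarrow> real"
  assumes "is_measure \<mu>"
  shows "doubling_minimizer \<mu> \<longleftrightarrow> (\<exists>c. \<forall>x. \<mu> x = c)"
proof
  assume "doubling_minimizer \<mu>"
  then have "doubling_const \<mu> \<le> 3"
    unfolding doubling_minimizer_def C_Z_eq_3 by simp
  then show "\<exists>c. \<forall>x. \<mu> x = c"
    using doubling_const_le_3_imp_const[OF assms] by metis
next
  assume "\<exists>c. \<forall>x. \<mu> x = c"
  then obtain c where "\<mu> = (\<lambda>_. c)"
    by auto
  moreover from this have "c > 0"
    using assms unfolding is_measure_def by simp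
  ultimately have "doubling_const \<mu> = 3"
    by (simp add: doubling_const_const)
  then show "doubling_minimizer \<mu>"
    unfolding doubling_minimizer_def doubling_def C_Z_eq_3 using assms by simp
qed

end
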